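(* Almost surely, $\lim_{n\to\infty}\frac{\bar A(B,F;n,0)}{n}=-c$. Consequently $\Lambda(0)=c$.
   Context: Let $c>0$, $q>0$, $\kappa>-1$. $F=(F(x))_{x\in\mathbb Z}$ and $B=(B(i))_{i\in\mathbb Z}$ are mutually independent families of i.i.d. random variables, $\mathbb P(B(i)=\pm1)=1/2$, and $F(x)$ has a density $\varrho$ that is even, continuous, strictly positive on $(-c,c)$, zero outside $(-c,c)$, with $\lim_{x\to c}\varrho(x)/|c-x|^{\kappa}=q$. A lazy walk satisfies $|\gamma(i+1)-\gamma(i)|\le1$; the action of a lazy walk $\gamma$ on $\{0,\dots,n\}$ is $A(B,F;\gamma)=\sum_{i=1}^nB(i)F(\gamma(i))$; $\bar A(B,F;n,k)$ is the minimal action over lazy walks from $(0,0)$ to $(n,k)$. The shape function $\Lambda$ is the deterministic function with $\bar A(B,F;n,[\alpha n])/n\to-\Lambda(\alpha)$ almost surely, $[\cdot]$ rounding towards $0$. *)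

theory Defs
  imports "HOL-Probability.Probability"
begin

definition lazy_walk :: "nat \<Rightarrow> int \<Rightarrow> (nat \<Rightarrow> int) \<Rightarrow> bool" where
  "lazy_walk n k \<gamma> \<longleftrightarrow> \<gamma> 0 = 0 \<and> \<gamma> n = k \<and> (\<forall>i<n. \<bar>\<gamma> (Suc i) - \<gamma> i\<bar> \<le> 1)"

definition action :: "(int \<Rightarrow> 'a \<Rightarrow> real) \<Rightarrow> (int \<Rightarrow> 'a \<Rightarrow> real) \<Rightarrow> 'a \<Rightarrow> nat \<Rightarrow> (nat \<Rightarrow> int) \<Rightarrow> real" where
  "action B F \<omega> n \<gamma> = (\<Sum>i=1..n. B (int i) \<omega> * F (\<gamma> i) \<omega>)"

definition min_action :: "(int \<Rightarrow> 'a \<Rightarrow> real) \<Rightarrow> (int \<Rightarrow> 'a \<Rightarrow> real) \<Rightarrow> 'a \<Rightarrow> nat \<Rightarrow> int \<Rightarrow> real" where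
  "min_action B F \<omega> n k = Inf {action B F \<omega> n \<gamma> | \<gamma>. lazy_walk n k \<gamma>}"

definition round0 :: "real \<Rightarrow> int" where
  "round0 x = (if x \<ge> 0 then \<lfloor>x\<rfloor> else \<lceil>x\<rceil>)"

text \<open>Shape function: the deterministic \<open>\<Lambda>(\<alpha>)\<close> with \<open>Abar(n,[\<alpha> n])/n \<rightarrow> -\<Lambda>(\<alpha>)\<close> a.s.\<close>
definition shape_fun :: "'a measure \<Rightarrow> (int \<Rightarrow> 'a \<Rightarrow> real) \<Rightarrow> (int \<Rightarrow> 'a \<Rightarrow> real) \<Rightarrow> real \<Rightarrow> real" where
  "shape_fun M B F \<alpha> = (THE L. AE \<omega> in M.
      (\<lambda>n. min_action B F \<omega> n (round0 (\<alpha> * real n)) / real n) \<longlonglongrightarrow> - L)"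

end

theory Submission
  imports Defs
begin

text \<open>
  Since \<open>|B(i)F(x)| \<le> c\<close>, every walk has action at least \<open>-nc\<close>.  Conversely, fix \<open>a < c\<close>.
  The pairs \<open>(F(2k), F(2k+1))\<close>, \<open>k \<ge> 0\<close>, are independent and each has a fixed positive
  probability of satisfying \<open>F(2k) > a\<close> and \<open>F(2k+1) < -a\<close>, so almost surely some pair does.
  A walk that runs to \<open>x = 2k\<close>, then sits at \<open>x+1\<close> when \<open>B(i) = 1\<close> and at \<open>x\<close> when
  \<open>B(i) = -1\<close>, and finally returns to \<open>0\<close>, collects less than \<open>-a\<close> at each of the
  \<open>n - 2x - 1\<close> trapped steps and at most \<open>c\<close> at the others; hence
  \<open>lim sup Abar(n,0)/n \<le> -a\<close>.
\<close>

lemma action_ge: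
  assumes "\<And>x. \<bar>F x \<omega>\<bar> \<le> c" and "\<And>i. \<bar>B i \<omega>\<bar> \<le> 1"
  shows "- (real n * c) \<le> action B F \<omega> n \<gamma>"
proof -
  have "(\<Sum>i=1..n. - c) \<le> (\<Sum>i=1..n. B (int i) \<omega> * F (\<gamma> i) \<omega>)"
  proof (rule sum_mono)
    fix i
    have "\<bar>B (int i) \<omega> * F (\<gamma> i) \<omega>\<bar> \<le> 1 * c"
      unfolding abs_mult using assms by (intro mult_mono) auto
    then show "- c \<le> B (int i) \<omega> * F (\<gamma> i) \<omega>" by linarith
  qed
  then show ?thesis by (simp add: action_def)
qed

lemma min_action_le_action:
  assumes "\<And>x. \<bar>F x \<omega>\<bar> \<le> c" and "\<And>i. \<bar>B i \<omega>\<bar> \<le> 1" and "lazy_walk n k \<gamma>"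
  shows "min_action B F \<omega> n k \<le> action B F \<omega> n \<gamma>"
  unfolding min_action_def
proof (rule cInf_lower)
  show "action B F \<omega> n \<gamma> \<in> {action B F \<omega> n \<gamma> | \<gamma>. lazy_walk n k \<gamma>}"
    using assms(3) by auto
  show "bdd_below {action B F \<omega> n \<gamma> | \<gamma>. lazy_walk n k \<gamma>}"
    using action_ge[where F = F and B = B, OF assms(1,2)] by (auto simp: bdd_below_def)
qed

lemma min_action_ge:
  assumes "\<And>x. \<bar>F x \<omega>\<bar> \<le> c" and "\<And>i. \<bar>B i \<omega>\<bar> \<le> 1" and "lazy_walk n k \<gamma>"
  shows "- (real n * c) \<le> min_action B F \<omega> n k"
  unfolding min_action_def
  using assms(3) action_ge[where F = F and B = B, OF assms(1,2)] by (intro cInf_greatest) auto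

lemma lazy_walk_zero: "lazy_walk n 0 (\<lambda>_. 0)"
  by (simp add: lazy_walk_def)

lemma min_action_le_trap:
  fixes x n :: nat
  assumes F_bound: "\<And>y. \<bar>F y \<omega>\<bar> \<le> c" and B_sign: "\<And>i. B i \<omega> = 1 \<or> B i \<omega> = -1"
    and trap: "a < F (int x) \<omega>" "F (int x + 1) \<omega> < - a"
    and n: "2 * x + 2 \<le> n"
  shows "min_action B F \<omega> n 0 \<le> real n * c - (c + a) * (real n - real (2 * x + 1))"
proof -
  have B_abs: "\<bar>B i \<omega>\<bar> \<le> 1" for i using B_sign[of i] by auto
  define \<gamma> where "\<gamma> i = int (if i \<le> x then i else if n - x \<le> i then n - i
      else if B (int i) \<omega> = 1 then x + 1 else x)" for i
  have walk: "lazy_walk n 0 \<gamma>"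
    unfolding lazy_walk_def
  proof (intro conjI allI impI)
    show "\<gamma> 0 = 0" "\<gamma> n = 0" using n by (simp_all add: \<gamma>_def)
    fix i assume "i < n"
    then show "\<bar>\<gamma> (Suc i) - \<gamma> i\<bar> \<le> 1" using n
      unfolding \<gamma>_def by (auto split: if_splits)
  qed
  define T where "T = {x + 1..<n - x}"
  define g where "g i = c - (if i \<in> T then c + a else 0)" for i
  have "action B F \<omega> n \<gamma> \<le> (\<Sum>i=1..n. g i)"
    unfolding action_def
  proof (rule sum_mono)
    fix i
    show "B (int i) \<omega> * F (\<gamma> i) \<omega> \<le> g i"
    proof (cases "i \<in> T")
      case True
      then have "\<gamma> i = (if B (int i) \<omega> = 1 then int x + 1 else int x)"
        by (auto simp: \<gamma>_def T_def)
      then show ?thesis using True B_sign[of "int i"] trap by (auto simp: g_def)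
    next
      case False
      have "\<bar>B (int i) \<omega> * F (\<gamma> i) \<omega>\<bar> \<le> 1 * c"
        unfolding abs_mult using B_abs F_bound by (intro mult_mono) auto
      then show ?thesis using False by (auto simp: g_def)
    qed
  qed
  also have "(\<Sum>i=1..n. g i) = real n * c - (c + a) * real (card ({1..n} \<inter> T))"
    by (simp add: g_def sum_subtractf sum.inter_restrict[symmetric])
  also have "{1..n} \<inter> T = T" by (auto simp: T_def)
  also have "real (card T) = real n - real (2 * x + 1)" using n by (simp add: T_def)
  finally have "action B F \<omega> n \<gamma> \<le> real n * c - (c + a) * (real n - real (2 * x + 1))" .
  then show ?thesis
    using min_action_le_action[where F = F and B = B, OF F_bound B_abs walk] by linarith
qed

lemma min_action_tendsto_neg_bound:
  assumes c: "0 < c" and F_bound: "\<And>y. \<bar>F y \<omega>\<bar> \<le> c"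
    and B_sign: "\<And>i. B i \<omega> = 1 \<or> B i \<omega> = -1"
    and traps: "\<And>a. a < c \<Longrightarrow> \<exists>x::nat. a < F (int x) \<omega> \<and> F (int x + 1) \<omega> < - a"
  shows "(\<lambda>n. min_action B F \<omega> n 0 / real n) \<longlonglongrightarrow> - c"
proof (rule order_tendstoI)
  have B_abs: "\<bar>B i \<omega>\<bar> \<le> 1" for i using B_sign[of i] by auto
  have lower: "- c \<le> min_action B F \<omega> n 0 / real n" if "1 \<le> n" for n :: nat
    using that min_action_ge[where F = F and B = B, OF F_bound B_abs lazy_walk_zero, of n]
    by (simp add: field_simps)
  fix l assume "l < - c"
  show "\<forall>\<^sub>F n in sequentially. l < min_action B F \<omega> n 0 / real n"
    using eventually_ge_at_top[of "1::nat"]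
    by eventually_elim (rule less_le_trans[OF \<open>l < - c\<close> lower])
next
  fix u assume u: "- c < u"
  define a where "a = (c - u) / 2"
  obtain x :: nat where trap: "a < F (int x) \<omega>" "F (int x + 1) \<omega> < - a"
    using traps[of a] u by (auto simp: a_def)
  define h where "h n = c - (c + a) * (1 - real (2 * x + 1) / real n)" for n :: nat
  have "h \<longlonglongrightarrow> c - (c + a) * (1 - 0)"
    unfolding h_def
    by (intro tendsto_intros tendsto_divide_0[OF tendsto_const] filterlim_real_sequentially)
  moreover have "c - (c + a) * (1 - 0) < u" using u by (simp add: a_def field_simps)
  ultimately have "\<forall>\<^sub>F n in sequentially. h n < u" by (rule order_tendstoD)
  then show "\<forall>\<^sub>F n in sequentially. min_action B F \<omega> n 0 / real n < u"
    using eventually_ge_at_top[of "2 * x + 2"]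
  proof eventually_elim
    case (elim n)
    then have "min_action B F \<omega> n 0 / real n
        \<le> (real n * c - (c + a) * (real n - real (2 * x + 1))) / real n"
      using min_action_le_trap[where F = F and B = B, OF F_bound B_sign trap] by (simp add: divide_right_mono)
    also have "\<dots> = h n" using elim by (simp add: h_def field_simps)
    finally show ?case using elim by linarith
  qed
qed

lemma AE_all_less_of_antimono:
  fixes c :: real
  assumes AE: "\<And>a. a < c \<Longrightarrow> AE \<omega> in M. P a \<omega>"
    and antimono: "\<And>a b \<omega>. a \<le> b \<Longrightarrow> P b \<omega> \<Longrightarrow> P a \<omega>"
  shows "AE \<omega> in M. \<forall>a < c. P a \<omega>"
proof -
  have "AE \<omega> in M. \<forall>r::rat. real_of_rat r < c \<longrightarrow> P (real_of_rat r) \<omega>"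
    using AE by (subst AE_all_countable) auto
  then show ?thesis
  proof (rule AE_mp[OF _ AE_I2], intro impI allI)
    fix \<omega> a assume rat: "\<forall>r::rat. real_of_rat r < c \<longrightarrow> P (real_of_rat r) \<omega>" and "a < c"
    then obtain r :: rat where "a < real_of_rat r" "real_of_rat r < c"
      using of_rat_dense by blast
    with rat antimono show "P a \<omega>" by (meson less_imp_le)
  qed
qed

lemma emeasure_density_pos:
  fixes f :: "real \<Rightarrow> real"
  assumes f: "(\<lambda>t. ennreal (f t)) \<in> borel_measurable lborel"
    and pos: "\<And>t. t \<in> {u<..<v} \<Longrightarrow> 0 < f t" and "u < v"
    and sub: "{u<..<v} \<subseteq> A" and A: "A \<in> sets borel"
  shows "emeasure (density lborel (\<lambda>t. ennreal (f t))) A \<noteq> 0"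
proof
  assume "emeasure (density lborel (\<lambda>t. ennreal (f t))) A = 0"
  then have "AE t in lborel. ennreal (f t) * indicator A t = 0"
    using A f by (simp add: emeasure_density nn_integral_0_iff_AE)
  then have "AE t in lborel. t \<notin> {u<..<v}"
  proof (rule AE_mp[OF _ AE_I2], intro impI)
    fix t assume "ennreal (f t) * indicator A t = 0"
    then show "t \<notin> {u<..<v}" using pos[of t] sub by (auto split: split_indicator)
  qed
  then have "emeasure lborel {u<..<v} = 0"
    by (subst (asm) AE_iff_measurable[of "{u<..<v}"]) auto
  with \<open>u < v\<close> show False by simp
qed

context prob_space
begin

lemma prob_distributed:
  assumes "distributed M lborel X f" and "A \<in> sets borel"
  shows "prob (X -` A \<inter> space M) = measure (density lborel f) A"
  using assms measure_distr[of X M lborel A] by (auto simp: distributed_def)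

lemma prob_distributed_pos:
  fixes X :: "'a \<Rightarrow> real"
  assumes X: "distributed M lborel X (\<lambda>t. ennreal (f t))"
    and "\<And>t. t \<in> {u<..<v} \<Longrightarrow> 0 < f t" "u < v" "{u<..<v} \<subseteq> A" and A: "A \<in> sets borel"
  shows "0 < prob (X -` A \<inter> space M)"
proof -
  have "emeasure M (X -` A \<inter> space M) = emeasure (distr M lborel X) A"
    using X A by (intro emeasure_distr[symmetric]) (auto simp: distributed_def)
  also have "\<dots> \<noteq> 0"
    using X emeasure_density_pos[OF _ assms(2-5)] by (simp add: distributed_def)
  finally show ?thesis by (simp add: emeasure_eq_measure zero_less_measure_iff)
qed

lemma AE_distributed_in:
  fixes X :: "'a \<Rightarrow> real"
  assumes X: "distributed M lborel X (\<lambda>t. ennreal (f t))"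
    and vanish: "\<And>t. t \<notin> S \<Longrightarrow> f t = 0"
  shows "AE \<omega> in M. X \<omega> \<in> S"
proof -
  have "AE t in lborel. 0 < f t \<longrightarrow> t \<in> S"
    using vanish by (intro AE_I2) force
  then have "AE t in density lborel (\<lambda>t. ennreal (f t)). t \<in> S"
    using X by (subst AE_density) (auto simp: distributed_def)
  moreover have "distr M lborel X = density lborel (\<lambda>t. ennreal (f t))"
    using X by (simp add: distributed_def)
  ultimately have "AE t in distr M lborel X. t \<in> S" by (simp only:)
  then show ?thesis
    using X by (intro AE_distrD[of X M lborel]) (auto simp: distributed_def)
qed

lemma AE_eq_or_eq:
  fixes X :: "'a \<Rightarrow> real"
  assumes [measurable]: "X \<in> borel_measurable M" and "a \<noteq> b"
    and prob: "prob {\<omega> \<in> space M. X \<omega> = a} + prob {\<omega> \<in> space M. X \<omega> = b} = 1"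
  shows "AE \<omega> in M. X \<omega> = a \<or> X \<omega> = b"
proof -
  have level_set: "{\<omega> \<in> space M. X \<omega> = y} \<in> events" for y by measurable
  have "{\<omega> \<in> space M. X \<omega> = a \<or> X \<omega> = b}
      = {\<omega> \<in> space M. X \<omega> = a} \<union> {\<omega> \<in> space M. X \<omega> = b}" by auto
  also have "prob \<dots> = 1"
    using prob \<open>a \<noteq> b\<close> level_set
    by (subst finite_measure_Union) auto
  finally have "prob {\<omega> \<in> space M. X \<omega> = a \<or> X \<omega> = b} = 1" .
  then have "AE \<omega> in M. \<omega> \<in> {\<omega> \<in> space M. X \<omega> = a \<or> X \<omega> = b}"
    by (rule AE_prob_1)
  then show ?thesis by auto
qed

lemma AE_ex_not_in_indep_events:
  assumes indep: "indep_events A UNIV" and A: "\<And>k. A k \<in> events"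
    and prob_le: "\<And>k. prob (A k) \<le> q" and "q < 1"
  shows "AE \<omega> in M. \<exists>k::nat. \<omega> \<notin> A k"
proof -
  have "0 \<le> q" using prob_le[of 0] measure_nonneg[of M "A 0"] by linarith
  have "prob (\<Inter>k. A k) \<le> q ^ N" for N
  proof (cases "N = 0")
    case False
    have "prob (\<Inter>k. A k) \<le> prob (\<Inter>k\<in>{..<N}. A k)"
      using A False by (intro finite_measure_mono) auto
    also have "\<dots> = (\<Prod>k\<in>{..<N}. prob (A k))"
      using indep False unfolding indep_events_def by (simp add: lessThan_empty_iff)
    also have "\<dots> \<le> (\<Prod>k\<in>{..<N}. q)"
      using prob_le by (intro prod_mono) auto
    finally show ?thesis by simp
  qed simp
  moreover have "(\<lambda>N. q ^ N) \<longlonglongrightarrow> 0"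
    using \<open>0 \<le> q\<close> \<open>q < 1\<close> by (intro LIMSEQ_power_zero) auto
  ultimately have "prob (\<Inter>k. A k) \<le> 0"
    by (intro LIMSEQ_le_const) auto
  then have "emeasure M (\<Inter>k. A k) = 0"
    using A by (simp add: emeasure_eq_measure measure_le_0_iff)
  then have "AE \<omega> in M. \<omega> \<notin> (\<Inter>k. A k)"
    using A sets.sets_into_space[OF A, of 0] by (subst AE_iff_measurable[of "\<Inter>k. A k"]) auto
  then show ?thesis by auto
qed

lemma AE_ex_pair_in:
  fixes X :: "'i \<Rightarrow> 'a \<Rightarrow> 'b::topological_space" and u v :: "nat \<Rightarrow> 'i"
  assumes indep: "indep_vars (\<lambda>_. borel) X UNIV"
    and "inj u" "inj v" "range u \<inter> range v = {}"
    and S: "S \<in> sets borel" and T: "T \<in> sets borel"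
    and prob_S: "\<And>k. s \<le> prob (X (u k) -` S \<inter> space M)" and "0 < s"
    and prob_T: "\<And>k. t \<le> prob (X (v k) -` T \<inter> space M)" and "0 < t"
  shows "AE \<omega> in M. \<exists>k. X (u k) \<omega> \<in> S \<and> X (v k) \<omega> \<in> T"
proof -
  have uv: "u k \<noteq> v k" for k using \<open>range u \<inter> range v = {}\<close> by auto
  have [measurable]: "X i \<in> borel_measurable M" for i
    using indep by (simp add: indep_vars_def)
  define K where "K k = {u k, v k}" for k
  define pair_in where "pair_in k f \<longleftrightarrow> f (u k) \<in> S \<and> f (v k) \<in> T" for k and f :: "'i \<Rightarrow> 'b"
  let ?Y = "\<lambda>k \<omega>. restrict (\<lambda>i. X i \<omega>) (K k)"
  have "indep_vars (\<lambda>k. PiM (K k) (\<lambda>_. borel)) ?Y UNIV"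
    using indep \<open>inj u\<close> \<open>inj v\<close> \<open>range u \<inter> range v = {}\<close>
    by (intro indep_vars_restrict)
       (auto simp: K_def disjoint_family_on_def inj_eq dest: sym)
  then have "indep_events (\<lambda>k. {\<omega> \<in> space M. \<not> pair_in k (?Y k \<omega>)}) UNIV"
  proof (rule indep_eventsI_indep_vars)
    fix k
    have [measurable]: "(\<lambda>f. f i) \<in> borel_measurable (PiM (K k) (\<lambda>_. borel))" if "i \<in> K k" for i
      using that by (rule measurable_component_singleton)
    show "{f \<in> space (PiM (K k) (\<lambda>_. borel)). \<not> pair_in k f} \<in> sets (PiM (K k) (\<lambda>_. borel))"
      unfolding pair_in_def using S T by (measurable; simp add: K_def)
  qed
  moreover have "{\<omega> \<in> space M. \<not> pair_in k (?Y k \<omega>)}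
      = space M - {\<omega> \<in> space M. X (u k) \<omega> \<in> S \<and> X (v k) \<omega> \<in> T}" for k
    by (auto simp: pair_in_def K_def)
  moreover have "prob (space M - {\<omega> \<in> space M. X (u k) \<omega> \<in> S \<and> X (v k) \<omega> \<in> T}) \<le> 1 - s * t"
    for k
  proof -
    let ?A = "\<lambda>i. if i = u k then S else T"
    have "prob (\<Inter>i\<in>{u k, v k}. X i -` ?A i \<inter> space M)
        = (\<Prod>i\<in>{u k, v k}. prob (X i -` ?A i \<inter> space M))"
      using S T by (intro indep_varsD[OF indep]) auto
    moreover have "(\<Inter>i\<in>{u k, v k}. X i -` ?A i \<inter> space M)
        = {\<omega> \<in> space M. X (u k) \<omega> \<in> S \<and> X (v k) \<omega> \<in> T}"
      using uv[of k] by auto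
    ultimately have "prob {\<omega> \<in> space M. X (u k) \<omega> \<in> S \<and> X (v k) \<omega> \<in> T}
        = prob (X (u k) -` S \<inter> space M) * prob (X (v k) -` T \<inter> space M)"
      using uv[of k] by simp
    also have "\<dots> \<ge> s * t"
      using prob_S prob_T \<open>0 < s\<close> \<open>0 < t\<close> by (intro mult_mono) auto
    finally show ?thesis
      using S T by (subst prob_compl) (auto simp: Collect_conj_eq)
  qed
  ultimately have "AE \<omega> in M. \<exists>k::nat. \<omega> \<notin> space M - {\<omega> \<in> space M. X (u k) \<omega> \<in> S \<and> X (v k) \<omega> \<in> T}"
    using S T \<open>0 < s\<close> \<open>0 < t\<close>
    by (intro AE_ex_not_in_indep_events[where q = "1 - s * t"]) auto
  then show ?thesis by (rule AE_mp[OF _ AE_I2]) auto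
qed

lemma AE_ex_adjacent_traps:
  fixes X :: "int + 'j \<Rightarrow> 'a \<Rightarrow> real"
  assumes indep: "indep_vars (\<lambda>_. borel) X UNIV"
    and dist: "\<And>x. distributed M lborel (X (Inl x)) (\<lambda>t. ennreal (f t))"
    and pos: "\<And>t. t \<in> {-c<..<c} \<Longrightarrow> 0 < f t" and "0 < c" "a < c"
  shows "AE \<omega> in M. \<exists>x::nat. a < X (Inl (int x)) \<omega> \<and> X (Inl (int x + 1)) \<omega> < - a"
proof -
  let ?D = "density lborel (\<lambda>t. ennreal (f t))"
  have D_pos: "0 < measure ?D A"
    if "u < v" "{u<..<v} \<subseteq> {-c<..<c}" "{u<..<v} \<subseteq> A" "A \<in> sets borel" for u v A
  proof -
    have "0 < prob (X (Inl 0) -` A \<inter> space M)"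
      using that pos by (intro prob_distributed_pos[OF dist]) auto
    then show ?thesis by (simp add: prob_distributed[OF dist that(4)])
  qed
  define b where "b = max a 0"
  have "0 < measure ?D {a<..}"
    using \<open>a < c\<close> \<open>0 < c\<close> by (intro D_pos[of b c]) (auto simp: b_def)
  moreover have "0 < measure ?D {..<-a}"
    using \<open>a < c\<close> \<open>0 < c\<close> by (intro D_pos[of "-c" "-b"]) (auto simp: b_def)
  moreover have "inj (\<lambda>k. Inl (int (2 * k)) :: int + 'j)"
    and "inj (\<lambda>k. Inl (int (2 * k) + 1) :: int + 'j)"
    and "range (\<lambda>k. Inl (int (2 * k)) :: int + 'j) \<inter> range (\<lambda>k. Inl (int (2 * k) + 1)) = {}"
    by (auto simp: inj_def) presburger
  ultimately have "AE \<omega> in M. \<exists>k::nat.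
      X (Inl (int (2 * k))) \<omega> \<in> {a<..} \<and> X (Inl (int (2 * k) + 1)) \<omega> \<in> {..<-a}"
    by (intro AE_ex_pair_in[OF indep, where s = "measure ?D {a<..}" and t = "measure ?D {..<-a}"])
       (simp_all add: prob_distributed[OF dist])
  then show ?thesis
  proof (rule AE_mp[OF _ AE_I2], intro impI)
    fix \<omega> assume "\<exists>k::nat. X (Inl (int (2 * k))) \<omega> \<in> {a<..} \<and> X (Inl (int (2 * k) + 1)) \<omega> \<in> {..<-a}"
    then obtain k :: nat where "a < X (Inl (int (2 * k))) \<omega>" "X (Inl (int (2 * k) + 1)) \<omega> < - a"
      by auto
    then show "\<exists>x::nat. a < X (Inl (int x)) \<omega> \<and> X (Inl (int x + 1)) \<omega> < - a" by blast
  qed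
qed

lemma shape_fun_eqI:
  assumes "AE \<omega> in M. (\<lambda>n. min_action B F \<omega> n (round0 (\<alpha> * real n)) / real n) \<longlonglongrightarrow> - L"
  shows "shape_fun M B F \<alpha> = L"
  unfolding shape_fun_def
proof (rule the_equality)
  fix L' assume "AE \<omega> in M. (\<lambda>n. min_action B F \<omega> n (round0 (\<alpha> * real n)) / real n) \<longlonglongrightarrow> - L'"
  with assms have "AE \<omega> in M. - L' = - L"
    by eventually_elim (rule LIMSEQ_unique)
  then show "L' = L" by simp
qed (fact assms)

end

theorem lemma3p5:
  fixes M :: "'a measure" and B F :: "int \<Rightarrow> 'a \<Rightarrow> real"
    and \<rho> :: "real \<Rightarrow> real" and c q \<kappa> :: real
  assumes "prob_space M"
    and "c > 0" and "q > 0" and "\<kappa> > -1"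
    and "\<And>x. F x \<in> borel_measurable M"
    and "\<And>i. B i \<in> borel_measurable M"
    and "prob_space.indep_vars M (\<lambda>_. borel)
           (\<lambda>j. case j of Inl x \<Rightarrow> F x | Inr i \<Rightarrow> B i) (UNIV :: (int + int) set)"
    and "\<And>i. measure M {\<omega> \<in> space M. B i \<omega> = 1} = 1/2"
    and "\<And>i. measure M {\<omega> \<in> space M. B i \<omega> = -1} = 1/2"
    and "\<And>x. distributed M lborel (F x) (\<lambda>t. ennreal (\<rho> t))"
    and "\<And>t. \<rho> (- t) = \<rho> t"
    and "continuous_on {-c<..<c} \<rho>"
    and "\<And>t. t \<in> {-c<..<c} \<Longrightarrow> \<rho> t > 0"
    and "\<And>t. t \<notin> {-c<..<c} \<Longrightarrow> \<rho> t = 0"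
    and "((\<lambda>t. \<rho> t / \<bar>c - t\<bar> powr \<kappa>) \<longlongrightarrow> q) (at_left c)"
  shows "(AE \<omega> in M. (\<lambda>n. min_action B F \<omega> n 0 / real n) \<longlonglongrightarrow> - c)
         \<and> shape_fun M B F 0 = c"
proof -
  interpret prob_space M by (rule assms(1))
  have F_bound: "AE \<omega> in M. \<forall>x. \<bar>F x \<omega>\<bar> \<le> c"
  proof (subst AE_all_countable, intro allI)
    fix x
    have "AE \<omega> in M. F x \<omega> \<in> {-c<..<c}"
      by (rule AE_distributed_in[OF assms(10)[of x]]) (rule assms(14))
    then show "AE \<omega> in M. \<bar>F x \<omega>\<bar> \<le> c" by eventually_elim auto
  qed
  have B_sign: "AE \<omega> in M. \<forall>i. B i \<omega> = 1 \<or> B i \<omega> = -1"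
    by (subst AE_all_countable, intro allI AE_eq_or_eq) (simp_all add: assms(6,8,9))
  have traps_at: "AE \<omega> in M. \<exists>x::nat. a < F (int x) \<omega> \<and> F (int x + 1) \<omega> < - a"
    if "a < c" for a
    using AE_ex_adjacent_traps[OF assms(7), where f = \<rho> and c = c and a = a] assms(2,10,13) that
    by simp
  have traps: "AE \<omega> in M. \<forall>a < c. \<exists>x::nat. a < F (int x) \<omega> \<and> F (int x + 1) \<omega> < - a"
  proof (rule AE_all_less_of_antimono[OF traps_at])
    fix a b \<omega> assume "a \<le> b" "\<exists>x::nat. b < F (int x) \<omega> \<and> F (int x + 1) \<omega> < - b"
    then show "\<exists>x::nat. a < F (int x) \<omega> \<and> F (int x + 1) \<omega> < - a"
      by (meson le_less_trans less_le_trans neg_le_iff_le)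
  qed
  have limit: "AE \<omega> in M. (\<lambda>n. min_action B F \<omega> n 0 / real n) \<longlonglongrightarrow> - c"
    using F_bound B_sign traps
    by eventually_elim (intro min_action_tendsto_neg_bound[OF assms(2)], auto)
  moreover have "shape_fun M B F 0 = c"
    using limit by (intro shape_fun_eqI) (simp add: round0_def)
  ultimately show ?thesis by simp
qed

end
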